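(* Let $c_0>0$. There exist constants $c_1,m_1>0$, depending only on $c_0,m,\alpha,\beta$, such that for every $\tau\in(0,1)$ and every time-splitting solution with mesh $\tau$ whose initial data satisfy $\sum_{j\in\mathbb{Z}}(|u_j^0|^2+|v_j^0|^2)\tau\le c_0$, one has for all $j\in\mathbb{Z}$, $n\ge0$: $$|u_j^{n,2}(\tau)|^2\le|u_j^{n,2}(0)|^2+m_1\mathfrak{s}_j^{n,2}(0)\tau+c_1|u_j^{n,2}(0)|^2|v_j^{n,2}(0)|^2\tau,$$ $$|v_j^{n,2}(\tau)|^2\le|v_j^{n,2}(0)|^2+m_1\mathfrak{s}_j^{n,2}(0)\tau+c_1|u_j^{n,2}(0)|^2|v_j^{n,2}(0)|^2\tau,$$ where $\mathfrak{s}_j^{n,2}(s)=|u_j^{n,2}(s)|^2+|v_j^{n,2}(s)|^2$. Furthermore, for every $T>0$ there exists $c_2>0$ depending only on $T,c_0,m,\alpha,\beta$ such that, for all such $\tau$ and data, all $j\in\mathbb{Z}$ and all $0\le n\le[T/\tau]+1$, $$|u_j^n|^2\le c_2\big(|u_{j-n}^0|^2+m_1c_0\big),\qquad |v_j^n|^2\le c_2\big(|v_{j+n}^0|^2+m_1c_0\big).$$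
   Context: Fix constants $m\ge 0$ and $\alpha,\beta\in\mathbb{R}$. Let (N) denote the ODE system on $\mathbb{C}^2$: $\frac{du}{ds}=imv+i\alpha u|v|^2+2i\beta(\bar u v+u\bar v)v$, $\frac{dv}{ds}=imu+i\alpha v|u|^2+2i\beta(\bar u v+u\bar v)u$. Time-splitting scheme with mesh $\tau>0$: given $(u_j^0,v_j^0)_{j\in\mathbb{Z}}\subset\mathbb{C}^2$ with $\sum_j(|u_j^0|^2+|v_j^0|^2)<\infty$, set $(u^{(\tau)},v^{(\tau)})(x,0)=(u_j^0,v_j^0)$ for $x\in[j\tau,(j+1)\tau)$. Inductively, once $(u^{(\tau)},v^{(\tau)})(\cdot,n\tau)$ is defined, set for $t\in[n\tau,(n+1)\tau)$: $u^{(\tau)}(x,t)=u^{(\tau)}(x-(t-n\tau),n\tau)$, $v^{(\tau)}(x,t)=v^{(\tau)}(x+(t-n\tau),n\tau)$; let $(u^{(\tau)},v^{(\tau)})(x,(n+1)\tau-)$ be the left limit in $t$; and for each $x$ define $(u^{(\tau)},v^{(\tau)})(x,(n+1)\tau)$ as the value at $s=\tau$ of the solution of (N) with value $(u^{(\tau)},v^{(\tau)})(x,(n+1)\tau-)$ at $s=0$ (this is globally well defined). Notation: $(u_j^n,v_j^n)=(u^{(\tau)},v^{(\tau)})(j\tau,n\tau)$, $(u_j^{n+1-},v_j^{n+1-})=(u^{(\tau)},v^{(\tau)})(j\tau,(n+1)\tau-)$, and $(u_j^{n,2}(s),v_j^{n,2}(s))$, $s\in[0,\tau]$, is the solution of (N)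 with $(u_j^{n,2}(0),v_j^{n,2}(0))=(u_j^{n+1-},v_j^{n+1-})$, so $(u_j^{n+1},v_j^{n+1})=(u_j^{n,2}(\tau),v_j^{n,2}(\tau))$. $[x]$ denotes the integer part. *)

theory Defs
  imports "HOL-Analysis.Analysis"
begin

definition NF_u :: "real \<Rightarrow> real \<Rightarrow> real \<Rightarrow> complex \<Rightarrow> complex \<Rightarrow> complex" where
  "NF_u m \<alpha> \<beta> u v =
     \<i> * of_real m * v + \<i> * of_real \<alpha> * u * of_real ((cmod v)\<^sup>2)
     + 2 * \<i> * of_real \<beta> * (cnj u * v + u * cnj v) * v"

definition NF_v :: "real \<Rightarrow> real \<Rightarrow> real \<Rightarrow> complex \<Rightarrow> complex \<Rightarrow> complex" where
  "NF_v m \<alpha> \<beta> u v =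
     \<i> * of_real m * u + \<i> * of_real \<alpha> * v * of_real ((cmod u)\<^sup>2)
     + 2 * \<i> * of_real \<beta> * (cnj u * v + u * cnj v) * u"

text \<open>U j n = u_j^n, V j n = v_j^n, and (U2 j n, V2 j n) is the solution of (N) on [0,tau]
  starting from (u_j^{n+1-}, v_j^{n+1-}) = (u_{j-1}^n, v_{j+1}^n) (exact transport by one cell).\<close>
definition time_splitting ::
  "real \<Rightarrow> real \<Rightarrow> real \<Rightarrow> real \<Rightarrow> (int \<Rightarrow> complex) \<Rightarrow> (int \<Rightarrow> complex)
   \<Rightarrow> (int \<Rightarrow> nat \<Rightarrow> complex) \<Rightarrow> (int \<Rightarrow> nat \<Rightarrow> complex)
   \<Rightarrow> (int \<Rightarrow> nat \<Rightarrow> real \<Rightarrow> complex) \<Rightarrow> (int \<Rightarrow> nat \<Rightarrow> real \<Rightarrow> complex) \<Rightarrow> bool" where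
  "time_splitting m \<alpha> \<beta> \<tau> u0 v0 U V U2 V2 \<longleftrightarrow>
     (\<forall>j. U j 0 = u0 j \<and> V j 0 = v0 j) \<and>
     (\<forall>j n. U2 j n 0 = U (j - 1) n \<and> V2 j n 0 = V (j + 1) n \<and>
        (\<forall>s\<in>{0..\<tau>}.
           (U2 j n has_vector_derivative NF_u m \<alpha> \<beta> (U2 j n s) (V2 j n s)) (at s within {0..\<tau>}) \<and>
           (V2 j n has_vector_derivative NF_v m \<alpha> \<beta> (U2 j n s) (V2 j n s)) (at s within {0..\<tau>})) \<and>
        U j (Suc n) = U2 j n \<tau> \<and> V j (Suc n) = V2 j n \<tau>)"

end

theory Submission
  imports Defs
begin

(*
  Along a solution of (N), d|u|^2/ds = -d|v|^2/ds, and this exchange rate is bounded by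
  m (|u|^2 + |v|^2) + 4 |beta| |u|^2 |v|^2. So the mass |u|^2 + |v|^2 is conserved, a Gronwall
  estimate controls the product |u|^2 |v|^2 on [0, tau], and the one-step bounds follow.
  On the lattice, |u_j^n|^2 moves right and |v_j^n|^2 moves left, and mass is only exchanged
  locally. So no window ever carries more than the initial total mass M, and the total
  v-density met along one u-characteristic is at most M too. As M tau <= c0, a discrete
  Gronwall inequality along the characteristic bounds |u_j^n|^2 by
  exp (m1 n tau + c1 c0) (|u_{j-n}^0|^2 + m1 c0); reflecting j to -j gives the bound for v.
*)

lemma DERIV_le_imp_le_affine:
  fixes f f' :: "real \<Rightarrow> real"
  assumes s: "s \<in> {0..t}"
    and f': "\<And>x. x \<in> {0..t} \<Longrightarrow> (f has_real_derivative f' x) (at x within {0..t})"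
    and le: "\<And>x. x \<in> {0..t} \<Longrightarrow> f' x \<le> L"
  shows "f s \<le> f 0 + L * s"
proof -
  have "\<exists>x\<in>{0..s}. f s - f 0 = (\<lambda>h. h * f' x) (s - 0)"
  proof (rule mvt_very_simple)
    show "0 \<le> s" using s by simp
    fix x assume "0 \<le> x" "x \<le> s"
    with s have "(f has_real_derivative f' x) (at x within {0..s})"
      by (auto intro: has_field_derivative_subset[OF f'])
    then show "(f has_derivative (\<lambda>h. h * f' x)) (at x within {0..s})"
      by (simp add: has_field_derivative_def mult_commute_abs)
  qed
  then obtain x where x: "x \<in> {0..s}" and "f s - f 0 = s * f' x" by auto
  moreover have "s * f' x \<le> s * L"
    using le[of x] s x by (intro mult_left_mono) auto
  ultimately show ?thesis by (simp add: mult.commute)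
qed

lemma gronwall_affine:
  fixes q q' :: "real \<Rightarrow> real"
  assumes "0 \<le> K" "0 \<le> C" and s: "s \<in> {0..t}"
    and q': "\<And>x. x \<in> {0..t} \<Longrightarrow> (q has_real_derivative q' x) (at x within {0..t})"
    and le: "\<And>x. x \<in> {0..t} \<Longrightarrow> q' x \<le> C + K * q x"
  shows "q s \<le> (q 0 + C * s) * exp (K * s)"
proof -
  define g where "g x = q x * exp (- K * x) - C * x" for x
  have "g s \<le> g 0 + 0 * s"
  proof (rule DERIV_le_imp_le_affine[OF s])
    fix x assume x: "x \<in> {0..t}"
    show "(g has_real_derivative (q' x - K * q x) * exp (- K * x) - C) (at x within {0..t})"
      unfolding g_def by (auto intro!: derivative_eq_intros q'[OF x] simp: algebra_simps)
    have "(q' x - K * q x) * exp (- K * x) \<le> C * exp (- K * x)"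
      using le[OF x] by (intro mult_right_mono) auto
    also have "\<dots> \<le> C"
      using x \<open>0 \<le> K\<close> \<open>0 \<le> C\<close> by (intro mult_left_le) auto
    finally show "(q' x - K * q x) * exp (- K * x) - C \<le> 0" by simp
  qed
  then have "q s * exp (- K * s) \<le> q 0 + C * s" by (simp add: g_def)
  then show ?thesis by (simp add: exp_minus field_simps)
qed

(* The alpha-terms of (N) only rotate phases and drop out of the exchange rate. *)
definition N_exchange :: "real \<Rightarrow> real \<Rightarrow> complex \<Rightarrow> complex \<Rightarrow> real" where
  "N_exchange m \<beta> u v = - 2 * m * Im (cnj u * v) - 8 * \<beta> * Re (cnj u * v) * Im (cnj u * v)"

lemma Re_cnj_mult_NF_u: "2 * Re (cnj u * NF_u m \<alpha> \<beta> u v) = N_exchange m \<beta> u v"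
  by (simp add: NF_u_def N_exchange_def cmod_power2 algebra_simps power2_eq_square)

lemma Re_cnj_mult_NF_v: "2 * Re (cnj v * NF_v m \<alpha> \<beta> u v) = - N_exchange m \<beta> u v"
  by (simp add: NF_v_def N_exchange_def cmod_power2 algebra_simps power2_eq_square)

lemma abs_N_exchange_le:
  assumes "0 \<le> m"
  shows "\<bar>N_exchange m \<beta> u v\<bar> \<le> m * ((cmod u)\<^sup>2 + (cmod v)\<^sup>2) + 4 * \<bar>\<beta>\<bar> * (cmod u)\<^sup>2 * (cmod v)\<^sup>2"
proof -
  define x y where "x = Re (cnj u * v)" and "y = Im (cnj u * v)"
  have "x\<^sup>2 + y\<^sup>2 = (cmod (cnj u * v))\<^sup>2"
    by (simp only: x_def y_def cmod_power2)
  then have xy: "x\<^sup>2 + y\<^sup>2 = (cmod u * cmod v)\<^sup>2"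
    by (simp add: norm_mult)
  have "\<bar>y\<bar> \<le> cmod u * cmod v"
    using abs_Im_le_cmod[of "cnj u * v"] by (simp add: y_def norm_mult)
  also have "\<dots> \<le> ((cmod u)\<^sup>2 + (cmod v)\<^sup>2) / 2"
    using sum_squares_bound[of "cmod u" "cmod v"] by simp
  finally have y_le: "2 * \<bar>y\<bar> \<le> (cmod u)\<^sup>2 + (cmod v)\<^sup>2" by simp
  have "2 * (\<bar>x\<bar> * \<bar>y\<bar>) \<le> x\<^sup>2 + y\<^sup>2"
    using sum_squares_bound[of "\<bar>x\<bar>" "\<bar>y\<bar>"] by simp
  then have xy_le: "8 * (\<bar>x\<bar> * \<bar>y\<bar>) \<le> 4 * ((cmod u)\<^sup>2 * (cmod v)\<^sup>2)"
    unfolding xy by (simp add: power_mult_distrib)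
  have "\<bar>N_exchange m \<beta> u v\<bar> = \<bar>- 2 * m * y - 8 * \<beta> * x * y\<bar>"
    by (simp only: N_exchange_def x_def y_def)
  also have "\<dots> \<le> \<bar>2 * m * y\<bar> + \<bar>8 * \<beta> * x * y\<bar>"
    by (rule order_trans[OF abs_triangle_ineq4]) simp
  also have "\<dots> = m * (2 * \<bar>y\<bar>) + \<bar>\<beta>\<bar> * (8 * (\<bar>x\<bar> * \<bar>y\<bar>))"
    using assms by (simp add: abs_mult)
  also have "\<dots> \<le> m * ((cmod u)\<^sup>2 + (cmod v)\<^sup>2) + \<bar>\<beta>\<bar> * (4 * ((cmod u)\<^sup>2 * (cmod v)\<^sup>2))"
    using y_le xy_le assms by (intro add_mono mult_left_mono) auto
  finally show ?thesis by (simp add: mult.assoc)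
qed

lemma has_real_derivative_cmod_power2:
  fixes u :: "real \<Rightarrow> complex"
  assumes "(u has_vector_derivative u') (at s within S)"
  shows "((\<lambda>s. (cmod (u s))\<^sup>2) has_real_derivative 2 * Re (cnj (u s) * u')) (at s within S)"
proof -
  have "((\<lambda>s. Re (u s * cnj (u s))) has_vector_derivative Re (u s * cnj u' + u' * cnj (u s))) (at s within S)"
    by (intro bounded_linear.has_vector_derivative[OF bounded_linear_Re]
        has_vector_derivative_mult has_vector_derivative_cnj assms)
  moreover have "Re (u s * cnj (u s)) = (cmod (u s))\<^sup>2" for s
    by (simp only: cmod_power2) (simp add: power2_eq_square)
  ultimately show ?thesis
    by (simp add: has_real_derivative_iff_has_vector_derivative mult.commute)
qed

locale N_solution =
  fixes m \<alpha> \<beta> \<tau> :: real and u v :: "real \<Rightarrow> complex"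
  assumes m_nonneg: "0 \<le> m" and tau_nonneg: "0 \<le> \<tau>"
    and solves: "\<forall>s\<in>{0..\<tau>}.
      (u has_vector_derivative NF_u m \<alpha> \<beta> (u s) (v s)) (at s within {0..\<tau>}) \<and>
      (v has_vector_derivative NF_v m \<alpha> \<beta> (u s) (v s)) (at s within {0..\<tau>})"
begin

abbreviation mass :: real where
  "mass \<equiv> (cmod (u 0))\<^sup>2 + (cmod (v 0))\<^sup>2"

lemma has_real_derivative_u_sq:
  assumes "s \<in> {0..\<tau>}"
  shows "((\<lambda>s. (cmod (u s))\<^sup>2) has_real_derivative N_exchange m \<beta> (u s) (v s)) (at s within {0..\<tau>})"
  using has_real_derivative_cmod_power2[OF solves[rule_format, OF assms, THEN conjunct1]]
  unfolding Re_cnj_mult_NF_u .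

lemma has_real_derivative_v_sq:
  assumes "s \<in> {0..\<tau>}"
  shows "((\<lambda>s. (cmod (v s))\<^sup>2) has_real_derivative - N_exchange m \<beta> (u s) (v s)) (at s within {0..\<tau>})"
  using has_real_derivative_cmod_power2[OF solves[rule_format, OF assms, THEN conjunct2]]
  unfolding Re_cnj_mult_NF_v .

lemma mass_conserved:
  assumes "s \<in> {0..\<tau>}"
  shows "(cmod (u s))\<^sup>2 + (cmod (v s))\<^sup>2 = mass"
proof -
  have "\<exists>c. \<forall>x\<in>{0..\<tau>}. (cmod (u x))\<^sup>2 + (cmod (v x))\<^sup>2 = c"
  proof (rule has_field_derivative_zero_constant)
    fix x assume "x \<in> {0..\<tau>}"
    from DERIV_add[OF has_real_derivative_u_sq[OF this] has_real_derivative_v_sq[OF this]]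
    show "((\<lambda>x. (cmod (u x))\<^sup>2 + (cmod (v x))\<^sup>2) has_real_derivative 0) (at x within {0..\<tau>})"
      by simp
  qed simp
  then show ?thesis using assms tau_nonneg by force
qed

lemma squares_product_le:
  assumes "s \<in> {0..\<tau>}"
  shows "(cmod (u s))\<^sup>2 * (cmod (v s))\<^sup>2
    \<le> ((cmod (u 0))\<^sup>2 * (cmod (v 0))\<^sup>2 + m * mass\<^sup>2 * s) * exp (4 * \<bar>\<beta>\<bar> * mass * s)"
proof (rule gronwall_affine[OF _ _ assms])
  fix x assume x: "x \<in> {0..\<tau>}"
  let ?a = "(cmod (u x))\<^sup>2" and ?b = "(cmod (v x))\<^sup>2" and ?E = "N_exchange m \<beta> (u x) (v x)"
  show "((\<lambda>s. (cmod (u s))\<^sup>2 * (cmod (v s))\<^sup>2) has_real_derivative ?E * ?b - ?E * ?a)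
      (at x within {0..\<tau>})"
    using DERIV_mult[OF has_real_derivative_u_sq[OF x] has_real_derivative_v_sq[OF x]] by simp
  have "?E * ?b - ?E * ?a \<le> \<bar>?E\<bar> * \<bar>?b - ?a\<bar>"
    by (simp add: right_diff_distrib' flip: abs_mult)
  also have "\<dots> \<le> (m * mass + 4 * \<bar>\<beta>\<bar> * (?a * ?b)) * mass"
  proof (rule mult_mono)
    show "\<bar>?E\<bar> \<le> m * mass + 4 * \<bar>\<beta>\<bar> * (?a * ?b)"
      using abs_N_exchange_le[OF m_nonneg, of \<beta> "u x" "v x"] mass_conserved[OF x]
      by (simp add: mult.assoc)
    show "\<bar>?b - ?a\<bar> \<le> mass"
      using mass_conserved[OF x] zero_le_power2[of "cmod (u x)"] zero_le_power2[of "cmod (v x)"]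
      by linarith
  qed (use m_nonneg in auto)
  finally show "?E * ?b - ?E * ?a \<le> m * mass\<^sup>2 + 4 * \<bar>\<beta>\<bar> * mass * (?a * ?b)"
    by (simp add: algebra_simps power2_eq_square)
qed (use m_nonneg in auto)

lemma abs_N_exchange_le_uniform:
  assumes s: "s \<in> {0..\<tau>}" and c: "mass * \<tau> \<le> c"
  shows "\<bar>N_exchange m \<beta> (u s) (v s)\<bar> \<le> m * mass
    + 4 * \<bar>\<beta>\<bar> * (((cmod (u 0))\<^sup>2 * (cmod (v 0))\<^sup>2 + m * mass\<^sup>2 * \<tau>) * exp (4 * \<bar>\<beta>\<bar> * c))"
proof -
  have "mass * s \<le> mass * \<tau>" using s by (intro mult_left_mono) auto
  then have "4 * \<bar>\<beta>\<bar> * (mass * s) \<le> 4 * \<bar>\<beta>\<bar> * c"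
    using c by (intro mult_left_mono) auto
  then have "exp (4 * \<bar>\<beta>\<bar> * mass * s) \<le> exp (4 * \<bar>\<beta>\<bar> * c)"
    by (simp add: mult.assoc)
  moreover have "m * mass\<^sup>2 * s \<le> m * mass\<^sup>2 * \<tau>"
    using s m_nonneg by (intro mult_left_mono) auto
  ultimately have "(cmod (u s))\<^sup>2 * (cmod (v s))\<^sup>2
      \<le> ((cmod (u 0))\<^sup>2 * (cmod (v 0))\<^sup>2 + m * mass\<^sup>2 * \<tau>) * exp (4 * \<bar>\<beta>\<bar> * c)"
    using squares_product_le[OF s] s m_nonneg
    by (elim order_trans, intro mult_mono) auto
  then have "4 * \<bar>\<beta>\<bar> * ((cmod (u s))\<^sup>2 * (cmod (v s))\<^sup>2)
      \<le> 4 * \<bar>\<beta>\<bar> * (((cmod (u 0))\<^sup>2 * (cmod (v 0))\<^sup>2 + m * mass\<^sup>2 * \<tau>) * exp (4 * \<bar>\<beta>\<bar> * c))"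
    by (intro mult_left_mono) auto
  moreover have "\<bar>N_exchange m \<beta> (u s) (v s)\<bar> \<le> m * mass + 4 * \<bar>\<beta>\<bar> * ((cmod (u s))\<^sup>2 * (cmod (v s))\<^sup>2)"
    using abs_N_exchange_le[OF m_nonneg, of \<beta> "u s" "v s"] mass_conserved[OF s]
    by (simp add: mult.assoc)
  ultimately show ?thesis by linarith
qed

lemma cmod_power2_growth:
  assumes c: "mass * \<tau> \<le> c"
    and m1: "m + 4 * \<bar>\<beta>\<bar> * exp (4 * \<bar>\<beta>\<bar> * c) * m * c \<le> m1"
    and c1: "4 * \<bar>\<beta>\<bar> * exp (4 * \<bar>\<beta>\<bar> * c) \<le> c1"
  shows "(cmod (u \<tau>))\<^sup>2 \<le> (cmod (u 0))\<^sup>2 + m1 * mass * \<tau> + c1 * (cmod (u 0))\<^sup>2 * (cmod (v 0))\<^sup>2 * \<tau>"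
    and "(cmod (v \<tau>))\<^sup>2 \<le> (cmod (v 0))\<^sup>2 + m1 * mass * \<tau> + c1 * (cmod (u 0))\<^sup>2 * (cmod (v 0))\<^sup>2 * \<tau>"
proof -
  define E where "E = exp (4 * \<bar>\<beta>\<bar> * c)"
  define L where "L = m * mass + 4 * \<bar>\<beta>\<bar> * (((cmod (u 0))\<^sup>2 * (cmod (v 0))\<^sup>2 + m * mass\<^sup>2 * \<tau>) * E)"
  have L: "\<bar>N_exchange m \<beta> (u x) (v x)\<bar> \<le> L" if "x \<in> {0..\<tau>}" for x
    using abs_N_exchange_le_uniform[OF that c] by (simp add: L_def E_def)
  have "(4 * \<bar>\<beta>\<bar> * E * m * mass) * (mass * \<tau>) * \<tau> \<le> (4 * \<bar>\<beta>\<bar> * E * m * mass) * c * \<tau>"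
    using c m_nonneg tau_nonneg by (intro mult_right_mono mult_left_mono) (auto simp: E_def)
  then have "L * \<tau> \<le> (m + 4 * \<bar>\<beta>\<bar> * E * m * c) * mass * \<tau>
      + 4 * \<bar>\<beta>\<bar> * E * (cmod (u 0))\<^sup>2 * (cmod (v 0))\<^sup>2 * \<tau>"
    by (simp add: L_def algebra_simps power2_eq_square)
  also have "\<dots> \<le> m1 * mass * \<tau> + c1 * (cmod (u 0))\<^sup>2 * (cmod (v 0))\<^sup>2 * \<tau>"
    using m1 c1 tau_nonneg by (intro add_mono mult_right_mono) (auto simp: E_def)
  finally have L_tau: "L * \<tau> \<le> m1 * mass * \<tau> + c1 * (cmod (u 0))\<^sup>2 * (cmod (v 0))\<^sup>2 * \<tau>" .
  have "(cmod (u \<tau>))\<^sup>2 \<le> (cmod (u 0))\<^sup>2 + L * \<tau>"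
    by (rule DERIV_le_imp_le_affine[OF _ has_real_derivative_u_sq])
      (use tau_nonneg L in \<open>auto simp: abs_le_iff\<close>)
  with L_tau show "(cmod (u \<tau>))\<^sup>2
      \<le> (cmod (u 0))\<^sup>2 + m1 * mass * \<tau> + c1 * (cmod (u 0))\<^sup>2 * (cmod (v 0))\<^sup>2 * \<tau>"
    by linarith
  have "(cmod (v \<tau>))\<^sup>2 \<le> (cmod (v 0))\<^sup>2 + L * \<tau>"
    by (rule DERIV_le_imp_le_affine[OF _ has_real_derivative_v_sq])
      (use tau_nonneg L in \<open>auto simp: abs_le_iff\<close>)
  with L_tau show "(cmod (v \<tau>))\<^sup>2
      \<le> (cmod (v 0))\<^sup>2 + m1 * mass * \<tau> + c1 * (cmod (u 0))\<^sup>2 * (cmod (v 0))\<^sup>2 * \<tau>"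
    by linarith
qed

end

lemma discrete_gronwall:
  fixes a x y :: "nat \<Rightarrow> real"
  assumes step: "\<And>k. k < n \<Longrightarrow> a (Suc k) \<le> a k * (1 + x k) + y k"
    and "\<And>k. 0 \<le> x k" and "\<And>k. 0 \<le> y k" and "0 \<le> a 0"
  shows "a n \<le> exp (\<Sum>k<n. x k) * (a 0 + (\<Sum>k<n. y k))"
  using step
proof (induction n)
  case (Suc n)
  define X Y where "X = (\<Sum>k<n. x k)" and "Y = (\<Sum>k<n. y k)"
  have "0 \<le> X" "0 \<le> Y"
    unfolding X_def Y_def using assms by (auto intro: sum_nonneg)
  have "a (Suc n) \<le> a n * (1 + x n) + y n" using Suc.prems by simp
  also have "\<dots> \<le> exp X * (a 0 + Y) * exp (x n) + exp (X + x n) * y n"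
  proof (intro add_mono mult_mono)
    show "a n \<le> exp X * (a 0 + Y)" using Suc by (simp add: X_def Y_def)
    show "1 + x n \<le> exp (x n)" by (rule exp_ge_add_one_self)
    show "y n \<le> exp (X + x n) * y n"
      using \<open>0 \<le> X\<close> assms(2,3)[of n] by (simp add: mult_le_cancel_right1)
  qed (use assms \<open>0 \<le> Y\<close> in auto)
  also have "\<dots> = exp (X + x n) * (a 0 + (Y + y n))"
    by (simp add: exp_add algebra_simps)
  finally show ?case by (simp add: X_def Y_def)
qed simp

locale lattice_transport =
  fixes w z :: "nat \<Rightarrow> int \<Rightarrow> real" and M :: real
  assumes w_nonneg: "0 \<le> w k i" and z_nonneg: "0 \<le> z k i"
    and transport: "w (Suc k) j + z (Suc k) j = w k (j - 1) + z k (j + 1)"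
    and initial_window_le: "(\<Sum>i\<in>{A..B}. w 0 i + z 0 i) \<le> M"
begin

lemma bound_nonneg: "0 \<le> M"
  using initial_window_le[of 1 0] by simp

lemma window_Suc:
  "(\<Sum>i\<in>{A..B}. w (Suc k) i + z (Suc k) i) = (\<Sum>i\<in>{A-1..B-1}. w k i) + (\<Sum>i\<in>{A+1..B+1}. z k i)"
proof -
  have "(\<Sum>i\<in>{A..B}. w k (i - 1)) = (\<Sum>i\<in>{A-1..B-1}. w k i)"
    by (rule sum.reindex_bij_witness[of _ "\<lambda>i. i + 1" "\<lambda>i. i - 1"]) auto
  moreover have "(\<Sum>i\<in>{A..B}. z k (i + 1)) = (\<Sum>i\<in>{A+1..B+1}. z k i)"
    by (rule sum.reindex_bij_witness[of _ "\<lambda>i. i - 1" "\<lambda>i. i + 1"]) auto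
  ultimately show ?thesis by (simp add: transport sum.distrib)
qed

lemma window_le: "(\<Sum>i\<in>{A..B}. w n i + z n i) \<le> M"
proof (induction n arbitrary: A B)
  case 0
  show ?case by (rule initial_window_le)
next
  case (Suc n)
  have "(\<Sum>i\<in>{A..B}. w (Suc n) i + z (Suc n) i) = (\<Sum>i\<in>{A-1..B-1}. w n i) + (\<Sum>i\<in>{A+1..B+1}. z n i)"
    by (rule window_Suc)
  also have "\<dots> \<le> (\<Sum>i\<in>{A-1..B+1}. w n i) + (\<Sum>i\<in>{A-1..B+1}. z n i)"
    by (intro add_mono sum_mono2) (auto simp: w_nonneg z_nonneg)
  also have "\<dots> \<le> M" by (simp flip: sum.distrib add: Suc.IH)
  finally show ?case .
qed

lemma neighbours_le: "w n (j - 1) + z n (j + 1) \<le> M"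
proof -
  have "w n (j - 1) + z n (j + 1) \<le> (\<Sum>i\<in>{j-1, j+1}. w n i + z n i)"
    using w_nonneg[of n "j + 1"] z_nonneg[of n "j - 1"] by simp
  also have "\<dots> \<le> (\<Sum>i\<in>{j-1..j+1}. w n i + z n i)"
    by (rule sum_mono2) (auto simp: w_nonneg z_nonneg add_nonneg_nonneg)
  also have "\<dots> \<le> M" by (rule window_le)
  finally show ?thesis .
qed

lemma shrinking_window_Suc:
  assumes "A < B"
  shows "(\<Sum>i\<in>{A+1..B-1}. w (Suc k) i + z (Suc k) i) + z k (A + 1) \<le> (\<Sum>i\<in>{A..B}. w k i + z k i)"
proof -
  have "{A+1..B} = insert (A + 1) {A+2..B}" using assms by auto
  then have z_sum: "z k (A + 1) + (\<Sum>i\<in>{A+2..B}. z k i) = (\<Sum>i\<in>{A+1..B}. z k i)"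
    by simp
  have "(\<Sum>i\<in>{A+1..B-1}. w (Suc k) i + z (Suc k) i) + z k (A + 1)
      = (\<Sum>i\<in>{A..B-2}. w k i) + (\<Sum>i\<in>{A+1..B}. z k i)"
    using window_Suc[where A = "A + 1" and B = "B - 1" and k = k] z_sum by (simp add: algebra_simps)
  also have "\<dots> \<le> (\<Sum>i\<in>{A..B}. w k i) + (\<Sum>i\<in>{A..B}. z k i)"
    by (intro add_mono sum_mono2) (auto simp: w_nonneg z_nonneg)
  finally show ?thesis by (simp add: sum.distrib)
qed

(* Each unit of z crossing the characteristic i = P + k + 1 of w leaves the shrinking
   window {P + k + 1 .. P + 2 N + 2 - k} for good. *)
lemma flux_le: "(\<Sum>k<N. z k (P + int k + 2)) \<le> M"
proof -
  define E where "E k = (\<Sum>i\<in>{P + int k + 1 .. P + 2 * int N + 2 - int k}. w k i + z k i)" for k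
  have "(\<Sum>k<K. z k (P + int k + 2)) + E K \<le> E 0" if "K \<le> N" for K
    using that
  proof (induction K)
    case (Suc K)
    have "E (Suc K) + z K (P + int K + 2) \<le> E K"
      using shrinking_window_Suc[of "P + int K + 1" "P + 2 * int N + 2 - int K" K] Suc.prems
      by (simp add: E_def algebra_simps)
    with Suc show ?case by simp
  qed simp
  moreover have "0 \<le> E N"
    unfolding E_def by (intro sum_nonneg add_nonneg_nonneg w_nonneg z_nonneg)
  moreover have "E 0 \<le> M"
    unfolding E_def by (rule initial_window_le)
  ultimately show ?thesis by fastforce
qed

lemma reflected: "lattice_transport (\<lambda>k i. z k (- i)) (\<lambda>k i. w k (- i)) M"
proof
  fix k :: nat and j :: int
  have shift: "- (j - 1) = - j + 1" "- (j + 1) = - j - 1" by auto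
  show "z (Suc k) (- j) + w (Suc k) (- j) = z k (- (j - 1)) + w k (- (j + 1))"
    unfolding shift using transport[of k "- j"] by linarith
next
  fix A B
  have "(\<Sum>i\<in>{A..B}. z 0 (- i) + w 0 (- i)) = (\<Sum>i\<in>{-B..-A}. w 0 i + z 0 i)"
    by (rule sum.reindex_bij_witness[of _ uminus uminus]) auto
  then show "(\<Sum>i\<in>{A..B}. z 0 (- i) + w 0 (- i)) \<le> M"
    using initial_window_le by simp
qed (simp_all add: w_nonneg z_nonneg)

lemma characteristic_bound:
  assumes "M * \<tau> \<le> c0" "0 \<le> \<tau>" "0 \<le> m1" "0 \<le> c1"
    and step: "\<And>k j. w (Suc k) j
      \<le> w k (j - 1) + m1 * (w k (j - 1) + z k (j + 1)) * \<tau> + c1 * w k (j - 1) * z k (j + 1) * \<tau>"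
  shows "w n j \<le> exp (m1 * \<tau> * n + c1 * c0) * (w 0 (j - int n) + m1 * c0)"
proof -
  define P where "P = j - int n"
  define b where "b k = z k (P + int k + 2)" for k
  have "\<tau> * (\<Sum>k<n. b k) \<le> \<tau> * M"
    unfolding b_def using flux_le \<open>0 \<le> \<tau>\<close> by (rule mult_left_mono)
  then have crossing: "\<tau> * (\<Sum>k<n. b k) \<le> c0"
    using assms(1) by (simp add: mult.commute)
  have along_characteristic: "w (Suc k) (P + int (Suc k))
      \<le> w k (P + int k) * (1 + (m1 * \<tau> + c1 * \<tau> * b k)) + m1 * \<tau> * b k" for k
    using step[of k "P + int k + 1"] by (simp add: b_def algebra_simps)
  have "w n (P + int n) \<le> exp (\<Sum>k<n. m1 * \<tau> + c1 * \<tau> * b k) * (w 0 P + (\<Sum>k<n. m1 * \<tau> * b k))"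
    using discrete_gronwall[where a = "\<lambda>k. w k (P + int k)"
      and x = "\<lambda>k. m1 * \<tau> + c1 * \<tau> * b k" and y = "\<lambda>k. m1 * \<tau> * b k", OF along_characteristic]
      assms by (simp add: b_def w_nonneg z_nonneg)
  also have "\<dots> \<le> exp (m1 * \<tau> * n + c1 * c0) * (w 0 P + m1 * c0)"
  proof (intro mult_mono add_left_mono)
    have "(\<Sum>k<n. m1 * \<tau> + c1 * \<tau> * b k) = m1 * \<tau> * n + c1 * (\<tau> * (\<Sum>k<n. b k))"
      by (simp add: sum.distrib sum_distrib_left mult.assoc)
    then show "exp (\<Sum>k<n. m1 * \<tau> + c1 * \<tau> * b k) \<le> exp (m1 * \<tau> * n + c1 * c0)"
      using crossing \<open>0 \<le> c1\<close> by (simp add: mult_left_mono)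
    have "(\<Sum>k<n. m1 * \<tau> * b k) = m1 * (\<tau> * (\<Sum>k<n. b k))"
      by (simp add: sum_distrib_left mult.assoc)
    then show "(\<Sum>k<n. m1 * \<tau> * b k) \<le> m1 * c0"
      using crossing \<open>0 \<le> m1\<close> by (simp add: mult_left_mono)
  qed (use assms in \<open>auto simp: b_def w_nonneg z_nonneg intro!: add_nonneg_nonneg sum_nonneg\<close>)
  finally show ?thesis by (simp add: P_def)
qed

end

lemma time_splitting_N_solution:
  assumes "time_splitting m \<alpha> \<beta> \<tau> u0 v0 U V U2 V2" "0 \<le> m" "0 \<le> \<tau>"
  shows "N_solution m \<alpha> \<beta> \<tau> (U2 j n) (V2 j n)"
  using assms by unfold_locales (auto simp: time_splitting_def)

lemma time_splitting_lattice_transport: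
  assumes ts: "time_splitting m \<alpha> \<beta> \<tau> u0 v0 U V U2 V2" and "0 \<le> m" "0 \<le> \<tau>"
    and summable: "(\<lambda>j. (cmod (u0 j))\<^sup>2 + (cmod (v0 j))\<^sup>2) summable_on UNIV"
  shows "lattice_transport (\<lambda>k i. (cmod (U i k))\<^sup>2) (\<lambda>k i. (cmod (V i k))\<^sup>2)
    (\<Sum>\<^sub>\<infinity>j. (cmod (u0 j))\<^sup>2 + (cmod (v0 j))\<^sup>2)"
proof
  fix k j
  interpret N_solution m \<alpha> \<beta> \<tau> "U2 j k" "V2 j k"
    using time_splitting_N_solution[OF assms(1-3)] .
  show "(cmod (U j (Suc k)))\<^sup>2 + (cmod (V j (Suc k)))\<^sup>2 = (cmod (U (j - 1) k))\<^sup>2 + (cmod (V (j + 1) k))\<^sup>2"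
    using mass_conserved[of \<tau>] ts \<open>0 \<le> \<tau>\<close> by (simp add: time_splitting_def)
next
  fix A B
  show "(\<Sum>i\<in>{A..B}. (cmod (U i 0))\<^sup>2 + (cmod (V i 0))\<^sup>2) \<le> (\<Sum>\<^sub>\<infinity>j. (cmod (u0 j))\<^sup>2 + (cmod (v0 j))\<^sup>2)"
    using finite_sum_le_infsum[OF summable] ts by (simp add: time_splitting_def)
qed simp_all

lemma mesh_times_steps_le:
  fixes \<tau> T :: real
  assumes "0 < \<tau>" "\<tau> < 1" "0 \<le> T" "n \<le> nat \<lfloor>T / \<tau>\<rfloor> + 1"
  shows "\<tau> * n \<le> T + 1"
proof -
  have "0 \<le> \<lfloor>T / \<tau>\<rfloor>" using assms(1,3) by simp
  then have "real n \<le> of_int \<lfloor>T / \<tau>\<rfloor> + 1"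
    using assms(4) by (metis of_nat_1 of_nat_add of_nat_mono of_nat_nat)
  then have "real n \<le> T / \<tau> + 1"
    using of_int_floor_le[of "T / \<tau>"] by linarith
  then have "\<tau> * n \<le> T + \<tau>"
    using assms(1) by (simp add: field_simps)
  with assms(2) show ?thesis by linarith
qed

context
  fixes m \<alpha> \<beta> c0 m1 c1 \<tau> :: real and u0 v0 :: "int \<Rightarrow> complex"
    and U V :: "int \<Rightarrow> nat \<Rightarrow> complex" and U2 V2 :: "int \<Rightarrow> nat \<Rightarrow> real \<Rightarrow> complex"
  assumes m_nonneg: "0 \<le> m"
    and m1: "m + 4 * \<bar>\<beta>\<bar> * exp (4 * \<bar>\<beta>\<bar> * c0) * m * c0 \<le> m1"
    and c1: "4 * \<bar>\<beta>\<bar> * exp (4 * \<bar>\<beta>\<bar> * c0) \<le> c1"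
    and tau_pos: "0 < \<tau>"
    and summable: "(\<lambda>j. (cmod (u0 j))\<^sup>2 + (cmod (v0 j))\<^sup>2) summable_on UNIV"
    and initial_mass: "(\<Sum>\<^sub>\<infinity>j. ((cmod (u0 j))\<^sup>2 + (cmod (v0 j))\<^sup>2) * \<tau>) \<le> c0"
    and ts: "time_splitting m \<alpha> \<beta> \<tau> u0 v0 U V U2 V2"
begin

private abbreviation M :: real where
  "M \<equiv> \<Sum>\<^sub>\<infinity>j. (cmod (u0 j))\<^sup>2 + (cmod (v0 j))\<^sup>2"

private lemma transport: "lattice_transport (\<lambda>k i. (cmod (U i k))\<^sup>2) (\<lambda>k i. (cmod (V i k))\<^sup>2) M"
  using time_splitting_lattice_transport[OF ts m_nonneg _ summable] tau_pos by simp

private lemma M_tau: "M * \<tau> \<le> c0"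
  using initial_mass infsum_cmult_left[of \<tau> "\<lambda>j. (cmod (u0 j))\<^sup>2 + (cmod (v0 j))\<^sup>2"] summable
  by (simp add: mult.commute)

private lemma stage_mass_le: "((cmod (U2 j n 0))\<^sup>2 + (cmod (V2 j n 0))\<^sup>2) * \<tau> \<le> c0"
proof -
  have "(cmod (U2 j n 0))\<^sup>2 + (cmod (V2 j n 0))\<^sup>2 \<le> M"
    using lattice_transport.neighbours_le[OF transport] ts by (simp add: time_splitting_def)
  then show ?thesis
    using M_tau tau_pos by (meson less_imp_le mult_right_mono order_trans)
qed

lemma time_splitting_step_bounds:
  shows "(cmod (U2 j n \<tau>))\<^sup>2 \<le> (cmod (U2 j n 0))\<^sup>2
      + m1 * ((cmod (U2 j n 0))\<^sup>2 + (cmod (V2 j n 0))\<^sup>2) * \<tau>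
      + c1 * (cmod (U2 j n 0))\<^sup>2 * (cmod (V2 j n 0))\<^sup>2 * \<tau>"
    and "(cmod (V2 j n \<tau>))\<^sup>2 \<le> (cmod (V2 j n 0))\<^sup>2
      + m1 * ((cmod (U2 j n 0))\<^sup>2 + (cmod (V2 j n 0))\<^sup>2) * \<tau>
      + c1 * (cmod (U2 j n 0))\<^sup>2 * (cmod (V2 j n 0))\<^sup>2 * \<tau>"
  using N_solution.cmod_power2_growth[OF time_splitting_N_solution[OF ts m_nonneg less_imp_le[OF tau_pos]]
      stage_mass_le m1 c1] .

private lemma constants_nonneg: "0 \<le> c0" "0 \<le> c1" "0 \<le> m1"
proof -
  show "0 \<le> c0"
    using lattice_transport.bound_nonneg[OF transport] M_tau tau_pos
    by (meson less_imp_le mult_nonneg_nonneg order_trans)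
  have "0 \<le> 4 * \<bar>\<beta>\<bar> * exp (4 * \<bar>\<beta>\<bar> * c0)" by simp
  with c1 show "0 \<le> c1" by linarith
  have "0 \<le> 4 * \<bar>\<beta>\<bar> * exp (4 * \<bar>\<beta>\<bar> * c0) * m * c0"
    using m_nonneg \<open>0 \<le> c0\<close> by simp
  then show "0 \<le> m1" using m1 m_nonneg by linarith
qed

private lemma characteristic_bounds:
  shows "(cmod (U j n))\<^sup>2 \<le> exp (m1 * \<tau> * n + c1 * c0) * ((cmod (u0 (j - int n)))\<^sup>2 + m1 * c0)"
    and "(cmod (V j n))\<^sup>2 \<le> exp (m1 * \<tau> * n + c1 * c0) * ((cmod (v0 (j + int n)))\<^sup>2 + m1 * c0)"
proof -
  note bounds = lattice_transport.characteristic_bound[OF _ M_tau less_imp_le[OF tau_pos] constants_nonneg(3,2)]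
  have U_step: "(cmod (U k (Suc n)))\<^sup>2 \<le> (cmod (U (k - 1) n))\<^sup>2
      + m1 * ((cmod (U (k - 1) n))\<^sup>2 + (cmod (V (k + 1) n))\<^sup>2) * \<tau>
      + c1 * (cmod (U (k - 1) n))\<^sup>2 * (cmod (V (k + 1) n))\<^sup>2 * \<tau>" for k n
    using time_splitting_step_bounds(1)[of k n] ts by (simp add: time_splitting_def)
  have V_step: "(cmod (V (- i) (Suc k)))\<^sup>2 \<le> (cmod (V (- (i - 1)) k))\<^sup>2
      + m1 * ((cmod (V (- (i - 1)) k))\<^sup>2 + (cmod (U (- (i + 1)) k))\<^sup>2) * \<tau>
      + c1 * (cmod (V (- (i - 1)) k))\<^sup>2 * (cmod (U (- (i + 1)) k))\<^sup>2 * \<tau>" for i k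
  proof -
    have shift: "- (i - 1) = - i + 1" "- (i + 1) = - i - 1" by simp_all
    show ?thesis
      unfolding shift using time_splitting_step_bounds(2)[of "- i" k] ts
      by (simp add: time_splitting_def ac_simps)
  qed
  show "(cmod (U j n))\<^sup>2 \<le> exp (m1 * \<tau> * n + c1 * c0) * ((cmod (u0 (j - int n)))\<^sup>2 + m1 * c0)"
    using bounds[OF transport U_step] ts by (simp add: time_splitting_def)
  show "(cmod (V j n))\<^sup>2 \<le> exp (m1 * \<tau> * n + c1 * c0) * ((cmod (v0 (j + int n)))\<^sup>2 + m1 * c0)"
    using bounds[OF lattice_transport.reflected[OF transport] V_step, where n = n and j = "- j"] ts
    by (simp add: time_splitting_def add.commute)
qed

lemma time_splitting_bounds_up_to:
  assumes "\<tau> < 1" "0 \<le> T" "n \<le> nat \<lfloor>T / \<tau>\<rfloor> + 1"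
  shows "(cmod (U j n))\<^sup>2 \<le> exp (m1 * (T + 1) + c1 * c0) * ((cmod (u0 (j - int n)))\<^sup>2 + m1 * c0)"
    and "(cmod (V j n))\<^sup>2 \<le> exp (m1 * (T + 1) + c1 * c0) * ((cmod (v0 (j + int n)))\<^sup>2 + m1 * c0)"
proof -
  have "m1 * \<tau> * n \<le> m1 * (T + 1)"
    using mesh_times_steps_le[OF tau_pos assms] constants_nonneg
    by (simp add: mult.assoc mult_left_mono)
  then have exp_le: "exp (m1 * \<tau> * n + c1 * c0) \<le> exp (m1 * (T + 1) + c1 * c0)"
    by simp
  show "(cmod (U j n))\<^sup>2 \<le> exp (m1 * (T + 1) + c1 * c0) * ((cmod (u0 (j - int n)))\<^sup>2 + m1 * c0)"
    using constants_nonneg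
    by (intro order_trans[OF characteristic_bounds(1) mult_right_mono[OF exp_le]]) simp
  show "(cmod (V j n))\<^sup>2 \<le> exp (m1 * (T + 1) + c1 * c0) * ((cmod (v0 (j + int n)))\<^sup>2 + m1 * c0)"
    using constants_nonneg
    by (intro order_trans[OF characteristic_bounds(2) mult_right_mono[OF exp_le]]) simp
qed

end

theorem lemma2p4:
  fixes m \<alpha> \<beta> :: real
  assumes "m \<ge> 0"
  shows "\<forall>c0>0. \<exists>c1>0. \<exists>m1>0.
    (\<forall>\<tau> u0 v0 U V U2 V2.
       0 < \<tau> \<and> \<tau> < 1 \<and>
       (\<lambda>j. (cmod (u0 j))\<^sup>2 + (cmod (v0 j))\<^sup>2) summable_on UNIV \<and>
       (\<Sum>\<^sub>\<infinity>j. ((cmod (u0 j))\<^sup>2 + (cmod (v0 j))\<^sup>2) * \<tau>) \<le> c0 \<and>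
       time_splitting m \<alpha> \<beta> \<tau> u0 v0 U V U2 V2 \<longrightarrow>
       (\<forall>j n.
          (cmod (U2 j n \<tau>))\<^sup>2 \<le> (cmod (U2 j n 0))\<^sup>2
             + m1 * ((cmod (U2 j n 0))\<^sup>2 + (cmod (V2 j n 0))\<^sup>2) * \<tau>
             + c1 * (cmod (U2 j n 0))\<^sup>2 * (cmod (V2 j n 0))\<^sup>2 * \<tau> \<and>
          (cmod (V2 j n \<tau>))\<^sup>2 \<le> (cmod (V2 j n 0))\<^sup>2
             + m1 * ((cmod (U2 j n 0))\<^sup>2 + (cmod (V2 j n 0))\<^sup>2) * \<tau>
             + c1 * (cmod (U2 j n 0))\<^sup>2 * (cmod (V2 j n 0))\<^sup>2 * \<tau>)) \<and>
    (\<forall>T>0. \<exists>c2>0. \<forall>\<tau> u0 v0 U V U2 V2.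
       0 < \<tau> \<and> \<tau> < 1 \<and>
       (\<lambda>j. (cmod (u0 j))\<^sup>2 + (cmod (v0 j))\<^sup>2) summable_on UNIV \<and>
       (\<Sum>\<^sub>\<infinity>j. ((cmod (u0 j))\<^sup>2 + (cmod (v0 j))\<^sup>2) * \<tau>) \<le> c0 \<and>
       time_splitting m \<alpha> \<beta> \<tau> u0 v0 U V U2 V2 \<longrightarrow>
       (\<forall>j n. n \<le> nat \<lfloor>T / \<tau>\<rfloor> + 1 \<longrightarrow>
          (cmod (U j n))\<^sup>2 \<le> c2 * ((cmod (u0 (j - int n)))\<^sup>2 + m1 * c0) \<and>
          (cmod (V j n))\<^sup>2 \<le> c2 * ((cmod (v0 (j + int n)))\<^sup>2 + m1 * c0)))"
proof (intro allI impI, goal_cases)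
  case (1 c0)
  define c1 where "c1 = 4 * \<bar>\<beta>\<bar> * exp (4 * \<bar>\<beta>\<bar> * c0) + 1"
  define m1 where "m1 = m + 4 * \<bar>\<beta>\<bar> * exp (4 * \<bar>\<beta>\<bar> * c0) * m * c0 + 1"
  have m1_ge: "m + 4 * \<bar>\<beta>\<bar> * exp (4 * \<bar>\<beta>\<bar> * c0) * m * c0 \<le> m1"
    and c1_ge: "4 * \<bar>\<beta>\<bar> * exp (4 * \<bar>\<beta>\<bar> * c0) \<le> c1"
    by (simp_all add: m1_def c1_def)
  have "0 < c1" "0 < m1"
    using assms 1 by (simp_all add: c1_def m1_def add_nonneg_pos)
  note step = time_splitting_step_bounds[OF assms m1_ge c1_ge]
    and up_to = time_splitting_bounds_up_to[OF assms m1_ge c1_ge]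
  show ?case
  proof (rule exI[of _ c1], rule conjI[OF \<open>0 < c1\<close>], rule exI[of _ m1], rule conjI[OF \<open>0 < m1\<close>],
      intro conjI allI impI, goal_cases)
    case (3 T)
    show ?case
      by (intro exI[of _ "exp (m1 * (T + 1) + c1 * c0)"] conjI allI impI exp_gt_zero)
        (use up_to 3 in \<open>auto simp del: exp_le_cancel_iff\<close>)
  qed (use step in auto)
qed

end
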